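(* Let $\mathbf A$ be an integral interior $r\ell uz$-groupoid and $\mathbf B$ a finite partial subalgebra of $\mathbf A$. Then $\mathbf F^+_{\mathbf A,\mathbf B^0}$ is finite. Moreover, if $\mathbf A$ is zero-bounded (i.e. $0\le x$ for all $x\in A$), then so is $\mathbf F^+_{\mathbf A,\mathbf B^0}$ (its constant $0$ is its least element).
   Context: An $r\ell uz$-groupoid is an algebra $(A,\wedge,\vee,\cdot,\backslash,/,1,0)$ with $(A,\wedge,\vee)$ a lattice (order $\le$), $(A,\cdot,1)$ a unital groupoid (binary operation, not necessarily associative, with two-sided unit $1$), $0\in A$ arbitrary, and $x\cdot y\le z\iff y\le x\backslash z\iff x\le z/y$. An interior one has in addition a unary $!$ with $1\le !1$, $!x\cdot!y\le !(x\cdot y)$, $!x\le x$, $!x\le !!x$, $x\le y\Rightarrow !x\le !y$; integral means $x\le 1$ for all $x$. A partial subalgebra $\mathbf B$ of $\mathbf A$ is a subset $B\subseteq A$ with $f^{\mathbf B}(\vec b)=f^{\mathbf A}(\vec b)$ if this lies in $B$, undefined otherwise. $\mathbf B^0$ denotes the partial subalgebra of $\mathbf A$ with universe $B\cup\{0^{\mathbf A}\}$. An enriched $ruz$-frame is $\mathbf F=(G,T,N,K,\epsilon)$ where $(G,\cdot,\varepsilon)$ is a unital groupoid, $T$ a set, $N\subseteq G\times T$ a nuclear relation (for all $x,y\in G$, $z\in T$ there exist $x\backslash\!\!\backslash z,\ z/\!\!/y\in T$ with $x\cdot y\,N\,z\iff y\,N\,x\backslash\!\!\backslash z\iff x\,N\,z/\!\!/y$),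 $K$ a sub-unital-groupoid of $G$, and $\epsilon\in T$. For $X\subseteq G$, $Y\subseteq T$: $X^{\rhd}=\{t\in T\mid \forall x\in X\,(xNt)\}$, $Y^{\lhd}=\{g\in G\mid\forall y\in Y\,(gNy)\}$, $\gamma_N(X)=X^{\rhd\lhd}$; $X$ closed if $\gamma_N(X)=X$. $\mathbf F^+$ has universe the closed sets, with $X\wedge Y=X\cap Y$, $X\vee Y=\gamma_N(X\cup Y)$, $X\cdot Y=\gamma_N(X\circ Y)$ where $X\circ Y=\{x\cdot y\}$, $X\backslash Y=\{z\mid X\circ\{z\}\subseteq Y\}$, $Y/X=\{z\mid\{z\}\circ X\subseteq Y\}$, $!X=\gamma_N(X\cap K)$, unit $\gamma_N(\{\varepsilon\})$, zero $\{\epsilon\}^{\lhd}$. For a partial subalgebra $\mathbf C$ of $\mathbf A$ (here $\mathbf C=\mathbf B^0$): $G_C$ is the sub-unital-groupoid of $(A,\cdot,1)$ generated by $C$; $U_{G_C}$ the set of unary linear polynomials over $G_C$ (maps $G_C\to G_C$ given by a groupoid term in which one variable occurs exactly once and other leaves are in $G_C$, including $\mathrm{id}$); $T_C=U_{G_C}\times C$; $x\,N_C\,(u,c)$ iff $u(x)\le^{\mathbf A}c$; $K_C$ the sub-unital-groupoid generated by $\{!^{\mathbf A}c\mid c\in C,\ !^{\mathbf A}c\in C\}$. Then $\mathbf F_{\mathbf A,\mathbf B^0}=(G_{B^0},T_{B^0},N_{B^0},K_{B^0},\epsilon)$ with $\epsilon=(\mathrm{id},0^{\mathbf A})$. *)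

theory Defs
  imports Main
begin

record 'a rluz =
  rmeet :: "'a \<Rightarrow> 'a \<Rightarrow> 'a"
  rjoin :: "'a \<Rightarrow> 'a \<Rightarrow> 'a"
  rmult :: "'a \<Rightarrow> 'a \<Rightarrow> 'a"
  rldiv :: "'a \<Rightarrow> 'a \<Rightarrow> 'a"
  rrdiv :: "'a \<Rightarrow> 'a \<Rightarrow> 'a"
  rone  :: 'a
  rzero :: 'a
  rbang :: "'a \<Rightarrow> 'a"

definition rle :: "'a rluz \<Rightarrow> 'a \<Rightarrow> 'a \<Rightarrow> bool" where
  "rle A x y \<longleftrightarrow> rmeet A x y = x"

definition is_lattice_ops :: "('a \<Rightarrow> 'a \<Rightarrow> 'a) \<Rightarrow> ('a \<Rightarrow> 'a \<Rightarrow> 'a) \<Rightarrow> bool" where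
  "is_lattice_ops m j \<longleftrightarrow>
     (\<forall>x y z. m x (m y z) = m (m x y) z) \<and> (\<forall>x y. m x y = m y x) \<and>
     (\<forall>x y z. j x (j y z) = j (j x y) z) \<and> (\<forall>x y. j x y = j y x) \<and>
     (\<forall>x y. m x (j x y) = x) \<and> (\<forall>x y. j x (m x y) = x)"

definition rluz_groupoid :: "'a rluz \<Rightarrow> bool" where
  "rluz_groupoid A \<longleftrightarrow>
     is_lattice_ops (rmeet A) (rjoin A) \<and>
     (\<forall>x. rmult A (rone A) x = x \<and> rmult A x (rone A) = x) \<and>
     (\<forall>x y z. (rle A (rmult A x y) z \<longleftrightarrow> rle A y (rldiv A x z)) \<and>
              (rle A (rmult A x y) z \<longleftrightarrow> rle A x (rrdiv A z y)))"

definition interior_rluz :: "'a rluz \<Rightarrow> bool" where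
  "interior_rluz A \<longleftrightarrow> rluz_groupoid A \<and>
     rle A (rone A) (rbang A (rone A)) \<and>
     (\<forall>x y. rle A (rmult A (rbang A x) (rbang A y)) (rbang A (rmult A x y))) \<and>
     (\<forall>x. rle A (rbang A x) x) \<and>
     (\<forall>x. rle A (rbang A x) (rbang A (rbang A x))) \<and>
     (\<forall>x y. rle A x y \<longrightarrow> rle A (rbang A x) (rbang A y))"

definition integral :: "'a rluz \<Rightarrow> bool" where
  "integral A \<longleftrightarrow> (\<forall>x. rle A x (rone A))"

definition zero_bounded :: "'a rluz \<Rightarrow> bool" where
  "zero_bounded A \<longleftrightarrow> (\<forall>x. rle A (rzero A) x)"

record ('g, 't) frame =
  fG    :: "'g set"
  fmult :: "'g \<Rightarrow> 'g \<Rightarrow> 'g"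
  funit :: 'g
  fT    :: "'t set"
  fN    :: "'g \<Rightarrow> 't \<Rightarrow> bool"
  fK    :: "'g set"
  feps  :: 't

definition rhd :: "('g, 't) frame \<Rightarrow> 'g set \<Rightarrow> 't set" where
  "rhd F X = {t \<in> fT F. \<forall>x\<in>X. fN F x t}"

definition lhd :: "('g, 't) frame \<Rightarrow> 't set \<Rightarrow> 'g set" where
  "lhd F Y = {g \<in> fG F. \<forall>y\<in>Y. fN F g y}"

definition gammaN :: "('g, 't) frame \<Rightarrow> 'g set \<Rightarrow> 'g set" where
  "gammaN F X = lhd F (rhd F X)"

definition fcirc :: "('g, 't) frame \<Rightarrow> 'g set \<Rightarrow> 'g set \<Rightarrow> 'g set" where
  "fcirc F X Y = {fmult F x y | x y. x \<in> X \<and> y \<in> Y}"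

record 'g cplx =
  cU     :: "'g set set"
  cmeet  :: "'g set \<Rightarrow> 'g set \<Rightarrow> 'g set"
  cjoin  :: "'g set \<Rightarrow> 'g set \<Rightarrow> 'g set"
  cmult  :: "'g set \<Rightarrow> 'g set \<Rightarrow> 'g set"
  cldiv  :: "'g set \<Rightarrow> 'g set \<Rightarrow> 'g set"
  crdiv  :: "'g set \<Rightarrow> 'g set \<Rightarrow> 'g set"
  cone   :: "'g set"
  czero  :: "'g set"
  cbang  :: "'g set \<Rightarrow> 'g set"

definition Fplus :: "('g, 't) frame \<Rightarrow> 'g cplx" where
  "Fplus F = \<lparr>
     cU = {X. X \<subseteq> fG F \<and> gammaN F X = X},
     cmeet = (\<lambda>X Y. X \<inter> Y),
     cjoin = (\<lambda>X Y. gammaN F (X \<union> Y)),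
     cmult = (\<lambda>X Y. gammaN F (fcirc F X Y)),
     cldiv = (\<lambda>X Y. {z \<in> fG F. fcirc F X {z} \<subseteq> Y}),
     crdiv = (\<lambda>Y X. {z \<in> fG F. fcirc F {z} X \<subseteq> Y}),
     cone = gammaN F {funit F},
     czero = lhd F {feps F},
     cbang = (\<lambda>X. gammaN F (X \<inter> fK F)) \<rparr>"

inductive_set gen_subgroupoid :: "'a rluz \<Rightarrow> 'a set \<Rightarrow> 'a set" for A S where
  base: "c \<in> S \<Longrightarrow> c \<in> gen_subgroupoid A S"
| unit: "rone A \<in> gen_subgroupoid A S"
| mult: "x \<in> gen_subgroupoid A S \<Longrightarrow> y \<in> gen_subgroupoid A S \<Longrightarrow>
           rmult A x y \<in> gen_subgroupoid A S"

abbreviation GC :: "'a rluz \<Rightarrow> 'a set \<Rightarrow> 'a set" where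
  "GC A C \<equiv> gen_subgroupoid A C"

text \<open>Unary linear polynomials over G_C (as maps; only their values on G_C matter).\<close>
inductive_set ulin :: "'a rluz \<Rightarrow> 'a set \<Rightarrow> ('a \<Rightarrow> 'a) set" for A G where
  ident: "id \<in> ulin A G"
| lmul: "u \<in> ulin A G \<Longrightarrow> g \<in> G \<Longrightarrow> (\<lambda>x. rmult A g (u x)) \<in> ulin A G"
| rmul: "u \<in> ulin A G \<Longrightarrow> g \<in> G \<Longrightarrow> (\<lambda>x. rmult A (u x) g) \<in> ulin A G"

definition KC :: "'a rluz \<Rightarrow> 'a set \<Rightarrow> 'a set" where
  "KC A C = gen_subgroupoid A {rbang A c | c. c \<in> C \<and> rbang A c \<in> C}"

definition frameAC :: "'a rluz \<Rightarrow> 'a set \<Rightarrow> ('a, ('a \<Rightarrow> 'a) \<times> 'a) frame" where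
  "frameAC A C = \<lparr>
     fG = GC A C,
     fmult = rmult A,
     funit = rone A,
     fT = ulin A (GC A C) \<times> C,
     fN = (\<lambda>x (u, c). rle A (u x) c),
     fK = KC A C,
     feps = (id, rzero A) \<rparr>"

definition frameAB0 :: "'a rluz \<Rightarrow> 'a set \<Rightarrow> ('a, ('a \<Rightarrow> 'a) \<times> 'a) frame" where
  "frameAB0 A B = frameAC A (B \<union> {rzero A})"

end

theory Submission
  imports Defs "HOL-Library.Ramsey" "HOL-Library.Infinite_Set"
begin

text \<open>Elements of \<open>G\<^sub>C\<close> are values of groupoid terms over the finite set \<open>C \<union> {1}\<close>, and
  unary linear polynomials are terms with one hole. By Kruskal's tree theorem the homeomorphic
  embedding of such terms is almost full, and in an integral algebra embedding a term into a
  bigger one can only decrease its value. Hence \<open>x \<mapsto> x\<^sup>\<rhd>\<close> maps a well-quasi-ordered set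
  monotonically to up-closed sets of another well-quasi-ordered set, so it has finitely many
  values; a closed set is determined by the values on its elements, so there are finitely
  many closed sets. If \<open>0\<close> is least, every \<open>g \<le> 0\<close> satisfies \<open>u(g) \<le> u(0) \<le> 0 \<le> c\<close>, so the
  zero of \<open>F\<^sup>+\<close> lies below every closed set.\<close>

section \<open>Almost full relations\<close>

definition almost_full_on :: "('b \<Rightarrow> 'b \<Rightarrow> bool) \<Rightarrow> 'b set \<Rightarrow> bool" where
  "almost_full_on P S \<longleftrightarrow> (\<forall>f :: nat \<Rightarrow> 'b. (\<forall>i. f i \<in> S) \<longrightarrow> (\<exists>i j. i < j \<and> P (f i) (f j)))"

lemma almost_full_onD:
  fixes f :: "nat \<Rightarrow> 'b"
  assumes "almost_full_on P S" "\<And>i. f i \<in> S"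
  obtains i j where "i < j" "P (f i) (f j)"
  using assms unfolding almost_full_on_def by blast

lemma almost_full_on_imp_homogeneous_subseq:
  fixes f :: "nat \<Rightarrow> 'b"
  assumes "almost_full_on P S" "\<And>i. f i \<in> S"
  obtains h :: "nat \<Rightarrow> nat" where "strict_mono h" "\<And>a b. a < b \<Longrightarrow> P (f (h a)) (f (h b))"
proof -
  define col where "col X = (if P (f (Min X)) (f (Max X)) then 0 else (1::nat))" for X :: "nat set"
  have "\<forall>x\<in>UNIV. \<forall>y\<in>UNIV. x \<noteq> y \<longrightarrow> col {x, y} < 2" by (simp add: col_def)
  from Ramsey2[OF infinite_UNIV_nat this] obtain Y t
    where Y: "infinite Y" "\<forall>x\<in>Y. \<forall>y\<in>Y. x \<noteq> y \<longrightarrow> col {x, y} = t"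
    by blast
  define h where "h = enumerate Y"
  have h: "strict_mono h" using Y(1) by (simp add: h_def strict_mono_def enumerate_mono)
  have col_h: "col {h a, h b} = (if P (f (h a)) (f (h b)) then 0 else 1)" if "a < b" for a b
  proof -
    have "h a < h b" using h that by (simp add: strict_mono_less)
    then show ?thesis by (simp add: col_def min_def max_def)
  qed
  have col_t: "col {h a, h b} = t" if "a < b" for a b
  proof -
    have "h a \<noteq> h b" using h that by (simp add: strict_mono_eq)
    then show ?thesis using Y(2) enumerate_in_set[OF Y(1)] by (simp add: h_def)
  qed
  obtain i j where "i < j" "P (f (h i)) (f (h j))"
    using almost_full_onD[OF assms(1), of "f \<circ> h"] assms(2) by auto
  then have "t = 0" using col_t col_h by fastforce
  then have "P (f (h a)) (f (h b))" if "a < b" for a b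
    using col_t[OF that] col_h[OF that] by (auto split: if_splits)
  with h that show ?thesis by blast
qed

lemma almost_full_on_map:
  assumes "almost_full_on P S" "X \<subseteq> \<phi> ` S"
    and "\<And>s t. s \<in> S \<Longrightarrow> t \<in> S \<Longrightarrow> P s t \<Longrightarrow> Q (\<phi> s) (\<phi> t)"
  shows "almost_full_on Q X"
  unfolding almost_full_on_def
proof (intro allI impI)
  fix f :: "nat \<Rightarrow> _" assume "\<forall>i. f i \<in> X"
  then have "\<forall>i. \<exists>s\<in>S. f i = \<phi> s" using assms(2) by blast
  then obtain g :: "nat \<Rightarrow> _" where g: "\<And>i. g i \<in> S" "\<And>i. f i = \<phi> (g i)" by metis
  obtain i j where "i < j" "P (g i) (g j)" using almost_full_onD[OF assms(1) g(1)] .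
  then show "\<exists>i j. i < j \<and> Q (f i) (f j)" using assms(3) g by metis
qed

lemma almost_full_on_Times_finite:
  assumes "almost_full_on P S" "finite C"
  shows "almost_full_on (\<lambda>p q. snd p = snd q \<and> P (fst p) (fst q)) (S \<times> C)"
  unfolding almost_full_on_def
proof (intro allI impI)
  fix f :: "nat \<Rightarrow> _" assume f: "\<forall>i. f i \<in> S \<times> C"
  have "finite (range (snd \<circ> f))"
    by (rule finite_subset[OF _ assms(2)]) (use f in \<open>auto simp: mem_Times_iff\<close>)
  then obtain k0 where "infinite {k. snd (f k) = snd (f k0)}"
    using pigeonhole_infinite[of UNIV "snd \<circ> f"] by auto
  moreover define K where "K = {k. snd (f k) = snd (f k0)}"
  ultimately have K: "infinite K" by simp
  obtain a b where "a < b" "P (fst (f (enumerate K a))) (fst (f (enumerate K b)))"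
    using almost_full_onD[OF assms(1), of "fst \<circ> f \<circ> enumerate K"] f by (auto simp: mem_Times_iff)
  moreover have "enumerate K a < enumerate K b" using K \<open>a < b\<close> by (simp add: enumerate_mono)
  moreover have "snd (f (enumerate K a)) = snd (f (enumerate K b))"
    using enumerate_in_set[OF K] by (simp add: K_def)
  ultimately show "\<exists>i j. i < j \<and> snd (f i) = snd (f j) \<and> P (fst (f i)) (fst (f j))" by blast
qed

text \<open>Along a \<open>P\<close>-chain, infinitely many values of \<open>ty\<close> would form a strictly increasing
  chain of \<open>Q\<close>-up-closed sets; witnesses of the strict increases then contradict almost-fullness
  of \<open>Q\<close>.\<close>

lemma finite_image_mono_upclosed:
  assumes "almost_full_on P S" "almost_full_on Q T"
    and ty_sub: "\<And>x. x \<in> S \<Longrightarrow> ty x \<subseteq> T"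
    and ty_mono: "\<And>x y. x \<in> S \<Longrightarrow> y \<in> S \<Longrightarrow> P x y \<Longrightarrow> ty x \<subseteq> ty y"
    and ty_upclosed: "\<And>x p q. x \<in> S \<Longrightarrow> p \<in> ty x \<Longrightarrow> q \<in> T \<Longrightarrow> Q p q \<Longrightarrow> q \<in> ty x"
  shows "finite (ty ` S)"
proof (rule ccontr)
  assume "infinite (ty ` S)"
  then obtain e :: "nat \<Rightarrow> _" where e: "inj e" "range e \<subseteq> ty ` S"
    by (meson infinite_countable_subset)
  define x where "x k = inv_into S ty (e k)" for k
  have x: "x k \<in> S" "e k = ty (x k)" for k
  proof -
    have "e k \<in> ty ` S" using e(2) by (simp add: image_subset_iff)
    then show "x k \<in> S" "e k = ty (x k)" by (simp_all add: x_def inv_into_into f_inv_into_f)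
  qed
  obtain h :: "nat \<Rightarrow> nat" where h: "strict_mono h" "\<And>a b. a < b \<Longrightarrow> P (x (h a)) (x (h b))"
    using almost_full_on_imp_homogeneous_subseq[where f = x, OF assms(1) x(1)] by blast
  define Y where "Y k = ty (x (h k))" for k
  have Y_mono: "Y a \<subseteq> Y b" if "a \<le> b" for a b
    using that ty_mono[OF x(1) x(1) h(2)] by (cases "a = b") (auto simp: Y_def)
  have Y_inj: "Y a \<noteq> Y b" if "a \<noteq> b" for a b
    using inj_eq[OF e(1)] strict_mono_eq[OF h(1)] that by (simp add: Y_def flip: x(2))
  have "\<exists>q. q \<in> Y (Suc k) - Y k" for k
    using Y_mono[of k "Suc k"] Y_inj[of "Suc k" k] by auto
  then obtain p where p: "\<And>k. p k \<in> Y (Suc k) - Y k" by (metis someI_ex)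
  have "p k \<in> T" for k using p[of k] ty_sub[OF x(1)] by (auto simp: Y_def)
  then obtain k l where "k < l" "Q (p k) (p l)" using almost_full_onD[OF assms(2)] by blast
  moreover have "p k \<in> Y l" using p[of k] Y_mono[of "Suc k" l] \<open>k < l\<close> by auto
  ultimately have "p l \<in> Y l" using ty_upclosed[OF x(1)] \<open>p l \<in> T\<close> by (simp add: Y_def)
  then show False using p[of l] by blast
qed

section \<open>Kruskal's tree theorem for binary trees\<close>

datatype 'l btree = Leaf 'l | Node "'l btree" "'l btree"

inductive emb :: "'l btree \<Rightarrow> 'l btree \<Rightarrow> bool" where
  emb_Leaf: "emb (Leaf a) (Leaf a)"
| emb_Node_left: "emb s t1 \<Longrightarrow> emb s (Node t1 t2)"
| emb_Node_right: "emb s t2 \<Longrightarrow> emb s (Node t1 t2)"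
| emb_Node: "emb s1 t1 \<Longrightarrow> emb s2 t2 \<Longrightarrow> emb (Node s1 s2) (Node t1 t2)"

lemma emb_refl: "emb t t"
  by (induction t) (auto intro: emb.intros)

definition bad :: "'l set \<Rightarrow> (nat \<Rightarrow> 'l btree) \<Rightarrow> bool" where
  "bad L f \<longleftrightarrow> (\<forall>i. set_btree (f i) \<subseteq> L) \<and> (\<forall>i j. i < j \<longrightarrow> \<not> emb (f i) (f j))"

definition bad_prefix :: "'l set \<Rightarrow> 'l btree list \<Rightarrow> bool" where
  "bad_prefix L ts \<longleftrightarrow> (\<exists>f. bad L f \<and> (\<forall>i<length ts. f i = ts ! i))"

text \<open>Nash-Williams' minimal bad sequence, built greedily: each element is a tree of least size
  that keeps the prefix extendable to a bad sequence.\<close>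

definition min_next :: "'l set \<Rightarrow> 'l btree list \<Rightarrow> 'l btree" where
  "min_next L ts = (SOME t. bad_prefix L (ts @ [t]) \<and>
     (\<forall>t'. bad_prefix L (ts @ [t']) \<longrightarrow> size t \<le> size t'))"

primrec min_prefix :: "'l set \<Rightarrow> nat \<Rightarrow> 'l btree list" where
  "min_prefix L 0 = []"
| "min_prefix L (Suc n) = min_prefix L n @ [min_next L (min_prefix L n)]"

definition min_bad :: "'l set \<Rightarrow> nat \<Rightarrow> 'l btree" where
  "min_bad L i = min_prefix L (Suc i) ! i"

lemma length_min_prefix [simp]: "length (min_prefix L n) = n"
  by (induction n) auto

lemma nth_min_prefix: "i < n \<Longrightarrow> min_prefix L n ! i = min_bad L i"
proof (induction n)
  case (Suc n)
  then show ?case by (cases "i = n") (auto simp: min_bad_def nth_append less_Suc_eq)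
qed simp

lemma bad_prefix_min_next:
  assumes "bad_prefix L ts"
  shows "bad_prefix L (ts @ [min_next L ts])"
    and "bad_prefix L (ts @ [t]) \<Longrightarrow> size (min_next L ts) \<le> size t"
proof -
  obtain f where f: "bad L f" "\<forall>i<length ts. f i = ts ! i"
    using assms by (auto simp: bad_prefix_def)
  have "bad_prefix L (ts @ [f (length ts)])"
    unfolding bad_prefix_def using f by (intro exI[of _ f]) (auto simp: nth_append less_Suc_eq)
  then have "\<exists>t. bad_prefix L (ts @ [t]) \<and> (\<forall>t'. bad_prefix L (ts @ [t']) \<longrightarrow> size t \<le> size t')"
    using ex_has_least_nat[of "\<lambda>t. bad_prefix L (ts @ [t])" _ size] by blast
  then have "bad_prefix L (ts @ [min_next L ts]) \<and>
      (\<forall>t'. bad_prefix L (ts @ [t']) \<longrightarrow> size (min_next L ts) \<le> size t')"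
    unfolding min_next_def by (rule someI_ex)
  then show "bad_prefix L (ts @ [min_next L ts])"
    and "bad_prefix L (ts @ [t]) \<Longrightarrow> size (min_next L ts) \<le> size t" by blast+
qed

lemma bad_prefix_min_prefix: "bad_prefix L [] \<Longrightarrow> bad_prefix L (min_prefix L n)"
  by (induction n) (auto dest: bad_prefix_min_next(1))

lemma bad_min_bad:
  assumes "bad_prefix L []"
  shows "bad L (min_bad L)"
proof -
  have agree: "\<exists>f. bad L f \<and> (\<forall>i\<le>n. f i = min_bad L i)" for n
  proof -
    obtain f where "bad L f" "\<forall>i<Suc n. f i = min_prefix L (Suc n) ! i"
      using bad_prefix_min_prefix[OF assms, of "Suc n"] by (auto simp: bad_prefix_def)
    then show ?thesis using nth_min_prefix[of _ "Suc n" L] by (auto simp del: min_prefix.simps)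
  qed
  have "set_btree (min_bad L i) \<subseteq> L" for i
    using agree[of i] unfolding bad_def by (metis order_refl)
  moreover have "\<not> emb (min_bad L i) (min_bad L j)" if "i < j" for i j
    using agree[of j] that unfolding bad_def by (metis order_refl less_imp_le)
  ultimately show ?thesis by (simp add: bad_def)
qed

lemma min_bad_minimal:
  assumes "bad_prefix L []" "bad L f" "\<forall>i<n. f i = min_bad L i"
  shows "size (min_bad L n) \<le> size (f n)"
proof -
  have "bad_prefix L (min_prefix L n @ [f n])"
    unfolding bad_prefix_def using assms(2,3) nth_min_prefix[of _ n L]
    by (intro exI[of _ f]) (auto simp: nth_append less_Suc_eq)
  then have "size (min_next L (min_prefix L n)) \<le> size (f n)"
    by (rule bad_prefix_min_next(2)[OF bad_prefix_min_prefix[OF assms(1)]])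
  then show ?thesis by (simp add: min_bad_def nth_append)
qed

lemma bad_finite_leaves:
  assumes "finite L" "bad L f"
  shows "finite {i. \<exists>a. f i = Leaf a}"
proof -
  have distinct: "f i \<noteq> f j" if "i < j" for i j
  proof
    assume "f i = f j"
    then have "emb (f i) (f j)" using emb_refl[of "f i"] by simp
    then show False using assms(2) that by (simp add: bad_def)
  qed
  have "inj f"
  proof (rule injI)
    show "i = j" if "f i = f j" for i j
      using distinct[of i j] distinct[of j i] that by (cases i j rule: linorder_cases) auto
  qed
  moreover have "f ` {i. \<exists>a. f i = Leaf a} \<subseteq> Leaf ` L"
  proof
    fix x assume "x \<in> f ` {i. \<exists>a. f i = Leaf a}"
    then obtain i a where "x = Leaf a" "f i = Leaf a" by auto
    moreover have "set_btree (f i) \<subseteq> L" using assms(2) by (simp add: bad_def)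
    ultimately show "x \<in> Leaf ` L" by simp
  qed
  then have "finite (f ` {i. \<exists>a. f i = Leaf a})"
    using assms(1) finite_subset by blast
  ultimately show ?thesis by (meson finite_imageD inj_on_subset subset_UNIV)
qed

lemma bad_splice:
  assumes "bad L m" "bad L g" "\<And>k. n \<le> \<phi> k" "\<And>s k. emb s (g k) \<Longrightarrow> emb s (m (\<phi> k))"
  shows "bad L (\<lambda>i. if i < n then m i else g (i - n))"
  unfolding bad_def
proof (intro conjI allI impI)
  show "set_btree (if i < n then m i else g (i - n)) \<subseteq> L" for i
    using assms(1,2) by (simp add: bad_def)
  show "\<not> emb (if i < n then m i else g (i - n)) (if j < n then m j else g (j - n))"
    if "i < j" for i j
  proof -
    consider "j < n" | "i < n" "n \<le> j" | "n \<le> i" using \<open>i < j\<close> by linarith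
    then show ?thesis
    proof cases
      case 1
      then show ?thesis using assms(1) \<open>i < j\<close> by (simp add: bad_def)
    next
      case 2
      have "\<not> emb (m i) (m (\<phi> (j - n)))"
        using assms(1) 2 assms(3)[of "j - n"] by (simp add: bad_def)
      then show ?thesis using 2 assms(4) by auto
    next
      case 3
      then show ?thesis using assms(2) \<open>i < j\<close> by (simp add: bad_def)
    qed
  qed
qed

text \<open>A bad sequence of proper subtrees, started at the one with the earliest parent, could be
  appended to the part of the minimal bad sequence before that parent, contradicting minimality.\<close>

lemma almost_full_on_min_bad_subtrees:
  assumes "bad_prefix L []"
  shows "almost_full_on emb {t. \<exists>i u. min_bad L i = Node t u \<or> min_bad L i = Node u t}"
    (is "almost_full_on emb ?S")
  unfolding almost_full_on_def
proof (intro allI impI)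
  define m where "m = min_bad L"
  have m: "bad L m" using bad_min_bad[OF assms] by (simp add: m_def)
  fix g :: "nat \<Rightarrow> _" assume "\<forall>k. g k \<in> ?S"
  then have "\<forall>k. \<exists>i u. m i = Node (g k) u \<or> m i = Node u (g k)" by (simp add: m_def)
  then obtain \<phi> where \<phi>: "\<And>k. \<exists>u. m (\<phi> k) = Node (g k) u \<or> m (\<phi> k) = Node u (g k)"
    by metis
  have g_sub: "set_btree (g k) \<subseteq> set_btree (m (\<phi> k))"
    and g_emb: "emb s (g k) \<Longrightarrow> emb s (m (\<phi> k))"
    and g_size: "size (g k) < size (m (\<phi> k))" for s k
    using \<phi>[of k] by (elim exE disjE; simp add: emb_Node_left emb_Node_right)+
  show "\<exists>i j. i < j \<and> emb (g i) (g j)"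
  proof (rule ccontr)
    assume g_good: "\<not> ?thesis"
    obtain k0 where k0: "\<And>k. \<phi> k0 \<le> \<phi> k"
      using ex_has_least_nat[of "\<lambda>_. True" 0 \<phi>] by blast
    define n where "n = \<phi> k0"
    have "bad L (\<lambda>k. g (k0 + k))"
      using m g_sub g_good unfolding bad_def by (meson add_less_cancel_left order_trans)
    then have "bad L (\<lambda>i. if i < n then m i else g (k0 + (i - n)))"
      using bad_splice[OF m, of "\<lambda>k. g (k0 + k)" n "\<lambda>k. \<phi> (k0 + k)"] k0 g_emb
      by (simp add: n_def)
    moreover have "\<forall>i<n. (if i < n then m i else g (k0 + (i - n))) = min_bad L i"
      by (simp add: m_def)
    ultimately have "size (m n) \<le> size (g k0)"
      using min_bad_minimal[OF assms] by (fastforce simp: m_def)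
    then show False using g_size[of k0] by (simp add: n_def)
  qed
qed

theorem almost_full_on_emb:
  fixes L :: "'l set"
  assumes "finite L"
  shows "almost_full_on emb {t. set_btree t \<subseteq> L}"
proof (rule ccontr)
  assume "\<not> ?thesis"
  then obtain f :: "nat \<Rightarrow> 'l btree"
    where "\<forall>i. set_btree (f i) \<subseteq> L" "\<forall>i j. i < j \<longrightarrow> \<not> emb (f i) (f j)"
    unfolding almost_full_on_def by blast
  then have E: "bad_prefix L []" unfolding bad_prefix_def bad_def by auto
  define m where "m = min_bad L"
  have m: "bad L m" using bad_min_bad[OF E] by (simp add: m_def)
  obtain N where "\<forall>i\<in>{i. \<exists>a. m i = Leaf a}. i < N"
    using bad_finite_leaves[OF assms m] finite_nat_set_iff_bounded by blast
  then have "\<exists>l r. m (N + i) = Node l r" for i by (cases "m (N + i)") auto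
  then obtain l r where lr: "\<And>i. m (N + i) = Node (l i) (r i)" by metis
  let ?S = "{t. \<exists>i u. m i = Node t u \<or> m i = Node u t}"
  have af: "almost_full_on emb ?S"
    using almost_full_on_min_bad_subtrees[OF E] by (simp add: m_def)
  have lS: "l i \<in> ?S" and rS: "r i \<in> ?S" for i using lr[of i] by blast+
  obtain h :: "nat \<Rightarrow> nat" where h: "strict_mono h" "\<And>a b. a < b \<Longrightarrow> emb (l (h a)) (l (h b))"
    using almost_full_on_imp_homogeneous_subseq[where f = l, OF af lS] by blast
  obtain a b where "a < b" "emb (r (h a)) (r (h b))"
    using almost_full_onD[where f = "r \<circ> h", OF af] rS by auto
  then have "emb (m (N + h a)) (m (N + h b))" using lr h(2) by (simp add: emb_Node)
  moreover have "N + h a < N + h b" using h(1) \<open>a < b\<close> by (simp add: strict_mono_less)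
  ultimately show False using m by (auto simp: bad_def)
qed

section \<open>Residuated lattice-ordered unital groupoids\<close>

context
  fixes A :: "'a rluz"
  assumes A: "rluz_groupoid A"
begin

lemma rle_refl: "rle A x x"
proof -
  have "is_lattice_ops (rmeet A) (rjoin A)" using A unfolding rluz_groupoid_def by blast
  then have "rmeet A x (rjoin A x (rmeet A x x)) = x" "rjoin A x (rmeet A x x) = x"
    unfolding is_lattice_ops_def by blast+
  then show ?thesis unfolding rle_def by metis
qed

lemma rle_trans: "rle A x y \<Longrightarrow> rle A y z \<Longrightarrow> rle A x z"
proof -
  have "is_lattice_ops (rmeet A) (rjoin A)" using A unfolding rluz_groupoid_def by blast
  then have "rmeet A x (rmeet A y z) = rmeet A (rmeet A x y) z"
    unfolding is_lattice_ops_def by blast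
  then show "rle A x y \<Longrightarrow> rle A y z \<Longrightarrow> rle A x z" unfolding rle_def by metis
qed

lemma rmult_one_left [simp]: "rmult A (rone A) x = x"
  and rmult_one_right [simp]: "rmult A x (rone A) = x"
  using A unfolding rluz_groupoid_def by blast+

lemma rle_rmult_iff_ldiv: "rle A (rmult A x y) z \<longleftrightarrow> rle A y (rldiv A x z)"
  using A unfolding rluz_groupoid_def by blast

lemma rle_rmult_iff_rdiv: "rle A (rmult A x y) z \<longleftrightarrow> rle A x (rrdiv A z y)"
  using A unfolding rluz_groupoid_def by blast

lemma rmult_mono_right:
  assumes "rle A y y'"
  shows "rle A (rmult A x y) (rmult A x y')"
proof -
  have "rle A y' (rldiv A x (rmult A x y'))" using rle_refl rle_rmult_iff_ldiv by blast
  then show ?thesis using rle_trans[OF assms] rle_rmult_iff_ldiv by blast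
qed

lemma rmult_mono_left:
  assumes "rle A x x'"
  shows "rle A (rmult A x y) (rmult A x' y)"
proof -
  have "rle A x' (rrdiv A (rmult A x' y) y)" using rle_refl rle_rmult_iff_rdiv by blast
  then show ?thesis using rle_trans[OF assms] rle_rmult_iff_rdiv by blast
qed

lemma integral_rmult_le_left: "integral A \<Longrightarrow> rle A (rmult A x y) x"
  using rmult_mono_right[of y "rone A" x] by (simp add: integral_def)

lemma integral_rmult_le_right: "integral A \<Longrightarrow> rle A (rmult A x y) y"
  using rmult_mono_left[of x "rone A" y] by (simp add: integral_def)

lemma ulin_mono: "u \<in> ulin A G \<Longrightarrow> rle A y y' \<Longrightarrow> rle A (u y) (u y')"
  by (induction rule: ulin.induct) (simp_all add: rmult_mono_left rmult_mono_right)

lemma ulin_zero_le: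
  assumes "zero_bounded A" "u \<in> ulin A G"
  shows "rle A (u (rzero A)) (rzero A)"
  using assms(2)
proof (induction rule: ulin.induct)
  case ident
  then show ?case by (simp add: rle_refl)
next
  case (lmul u g)
  have "rle A (rmult A g (rzero A)) (rzero A)"
    using assms(1) rle_rmult_iff_ldiv by (simp add: zero_bounded_def)
  then show ?case using rle_trans rmult_mono_right[OF lmul.IH] by blast
next
  case (rmul u g)
  have "rle A (rmult A (rzero A) g) (rzero A)"
    using assms(1) rle_rmult_iff_rdiv by (simp add: zero_bounded_def)
  then show ?case using rle_trans rmult_mono_left[OF rmul.IH] by blast
qed

end

section \<open>Terms, polynomials and the frame \<open>F\<^sub>A\<^sub>,\<^sub>C\<close>\<close>

text \<open>Groupoid terms with constants \<open>Some a\<close>; the leaf \<open>Leaf None\<close> is the variable of a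
  unary linear polynomial.\<close>

fun eval_tree :: "'a rluz \<Rightarrow> 'a \<Rightarrow> 'a option btree \<Rightarrow> 'a" where
  "eval_tree A y (Leaf None) = y"
| "eval_tree A y (Leaf (Some a)) = a"
| "eval_tree A y (Node s t) = rmult A (eval_tree A y s) (eval_tree A y t)"

lemma emb_eval_tree_le:
  assumes "rluz_groupoid A" "integral A" "emb s t"
  shows "rle A (eval_tree A y t) (eval_tree A y s)"
  using assms(3)
proof (induction rule: emb.induct)
  case (emb_Leaf a)
  then show ?case using rle_refl[OF assms(1)] by simp
next
  case (emb_Node_left s t1 t2)
  then show ?case using rle_trans[OF assms(1) integral_rmult_le_left[OF assms(1,2)]] by simp
next
  case (emb_Node_right s t2 t1)
  then show ?case using rle_trans[OF assms(1) integral_rmult_le_right[OF assms(1,2)]] by simp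
next
  case (emb_Node s1 t1 s2 t2)
  then show ?case
    using rle_trans[OF assms(1) rmult_mono_left[OF assms(1)] rmult_mono_right[OF assms(1)]] by simp
qed

lemma gen_subgroupoid_eval_tree:
  assumes "g \<in> gen_subgroupoid A C"
  shows "\<exists>t. set_btree t \<subseteq> Some ` insert (rone A) C \<and> (\<forall>y. eval_tree A y t = g)"
  using assms
proof (induction rule: gen_subgroupoid.induct)
  case (base c)
  show ?case by (rule exI[of _ "Leaf (Some c)"]) (simp add: base)
next
  case unit
  show ?case by (rule exI[of _ "Leaf (Some (rone A))"]) simp
next
  case (mult x1 x2)
  then obtain s t where "set_btree s \<subseteq> Some ` insert (rone A) C" "\<forall>y. eval_tree A y s = x1"
    "set_btree t \<subseteq> Some ` insert (rone A) C" "\<forall>y. eval_tree A y t = x2" by blast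
  then show ?case by (intro exI[of _ "Node s t"]) simp
qed

lemma ulin_eval_tree:
  assumes "u \<in> ulin A (gen_subgroupoid A C)"
  shows "\<exists>t. set_btree t \<subseteq> insert None (Some ` insert (rone A) C) \<and> u = (\<lambda>y. eval_tree A y t)"
  using assms
proof (induction rule: ulin.induct)
  case ident
  show ?case by (rule exI[of _ "Leaf None"]) auto
next
  case (lmul u g)
  obtain v where "set_btree v \<subseteq> insert None (Some ` insert (rone A) C)" "u = (\<lambda>y. eval_tree A y v)"
    using lmul.IH by blast
  moreover obtain t where "set_btree t \<subseteq> Some ` insert (rone A) C" "\<forall>y. eval_tree A y t = g"
    using gen_subgroupoid_eval_tree[OF lmul.hyps(2)] by blast
  ultimately show ?case by (intro exI[of _ "Node t v"]) auto
next
  case (rmul u g)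
  obtain v where "set_btree v \<subseteq> insert None (Some ` insert (rone A) C)" "u = (\<lambda>y. eval_tree A y v)"
    using rmul.IH by blast
  moreover obtain t where "set_btree t \<subseteq> Some ` insert (rone A) C" "\<forall>y. eval_tree A y t = g"
    using gen_subgroupoid_eval_tree[OF rmul.hyps(2)] by blast
  ultimately show ?case by (intro exI[of _ "Node v t"]) auto
qed

lemma almost_full_on_gen_subgroupoid:
  assumes "rluz_groupoid A" "integral A" "finite C"
  shows "almost_full_on (\<lambda>x y. rle A y x) (gen_subgroupoid A C)"
proof -
  let ?L = "insert None (Some ` insert (rone A) C)"
  have "finite ?L" using assms(3) by simp
  moreover have "gen_subgroupoid A C \<subseteq> eval_tree A (rone A) ` {t. set_btree t \<subseteq> ?L}"
  proof
    fix g assume "g \<in> gen_subgroupoid A C"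
    then obtain t where "set_btree t \<subseteq> Some ` insert (rone A) C" "\<forall>y. eval_tree A y t = g"
      by (blast dest: gen_subgroupoid_eval_tree)
    then show "g \<in> eval_tree A (rone A) ` {t. set_btree t \<subseteq> ?L}"
      by (intro image_eqI[of _ _ t]) auto
  qed
  ultimately show ?thesis
    by (rule almost_full_on_map[OF almost_full_on_emb])
      (simp add: emb_eval_tree_le[OF assms(1,2)])
qed

lemma almost_full_on_ulin:
  assumes "rluz_groupoid A" "integral A" "finite C"
  shows "almost_full_on (\<lambda>u v. \<forall>y. rle A (v y) (u y)) (ulin A (gen_subgroupoid A C))"
proof -
  let ?L = "insert None (Some ` insert (rone A) C)"
  have "finite ?L" using assms(3) by simp
  moreover have "ulin A (gen_subgroupoid A C) \<subseteq> (\<lambda>t y. eval_tree A y t) ` {t. set_btree t \<subseteq> ?L}"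
  proof
    fix u assume "u \<in> ulin A (gen_subgroupoid A C)"
    then obtain t where "set_btree t \<subseteq> ?L" "u = (\<lambda>y. eval_tree A y t)"
      by (blast dest: ulin_eval_tree)
    then show "u \<in> (\<lambda>t y. eval_tree A y t) ` {t. set_btree t \<subseteq> ?L}"
      by (intro image_eqI[of _ _ t]) auto
  qed
  ultimately show ?thesis
    by (rule almost_full_on_map[OF almost_full_on_emb])
      (simp add: emb_eval_tree_le[OF assms(1,2)])
qed

lemma finite_cU_Fplus:
  assumes "finite ((\<lambda>x. rhd F {x}) ` fG F)"
  shows "finite (cU (Fplus F))"
proof -
  let ?ty = "\<lambda>x. rhd F {x}" and ?cl = "\<lambda>\<T>. lhd F (fT F \<inter> \<Inter> \<T>)"
  have "X \<in> ?cl ` Pow (?ty ` fG F)" if X: "X \<in> cU (Fplus F)" for X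
  proof (rule image_eqI)
    have "X \<subseteq> fG F" "gammaN F X = X" using X by (simp_all add: Fplus_def)
    moreover have "rhd F X = fT F \<inter> \<Inter> (?ty ` X)" unfolding rhd_def by blast
    ultimately show "X = ?cl (?ty ` X)" "?ty ` X \<in> Pow (?ty ` fG F)"
      unfolding gammaN_def by auto
  qed
  then have "cU (Fplus F) \<subseteq> ?cl ` Pow (?ty ` fG F)" by blast
  moreover have "finite (?cl ` Pow (?ty ` fG F))" using assms by simp
  ultimately show ?thesis by (rule finite_subset)
qed

lemma rhd_frameAC_singleton:
  "rhd (frameAC A C) {x} = {p \<in> ulin A (gen_subgroupoid A C) \<times> C. rle A (fst p x) (snd p)}"
  by (auto simp: rhd_def frameAC_def)

lemma finite_types_frameAC:
  assumes "rluz_groupoid A" "integral A" "finite C"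
  shows "finite ((\<lambda>x. rhd (frameAC A C) {x}) ` fG (frameAC A C))"
proof -
  let ?U = "ulin A (gen_subgroupoid A C)"
  let ?ty = "\<lambda>x. {p \<in> ?U \<times> C. rle A (fst p x) (snd p)}"
  have "finite (?ty ` gen_subgroupoid A C)"
  proof (rule finite_image_mono_upclosed[OF almost_full_on_gen_subgroupoid[OF assms]
        almost_full_on_Times_finite[OF almost_full_on_ulin[OF assms] assms(3)]])
    show "?ty x \<subseteq> ?U \<times> C" for x by blast
  next
    fix x y assume "rle A y x"
    show "?ty x \<subseteq> ?ty y"
    proof
      fix p assume p: "p \<in> ?ty x"
      then have "rle A (fst p y) (fst p x)" using ulin_mono[OF assms(1) _ \<open>rle A y x\<close>] by auto
      then show "p \<in> ?ty y" using p rle_trans[OF assms(1)] by blast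
    qed
  next
    fix x p q
    assume "p \<in> ?ty x" and q: "q \<in> ?U \<times> C"
      and "snd p = snd q \<and> (\<forall>y. rle A (fst q y) (fst p y))"
    then have "rle A (fst q x) (snd q)" using rle_trans[OF assms(1)] by auto
    then show "q \<in> ?ty x" using q by blast
  qed
  then show ?thesis unfolding rhd_frameAC_singleton by (simp add: frameAC_def)
qed

lemma czero_Fplus_frameAC_le:
  assumes "rluz_groupoid A" "zero_bounded A" "X \<in> cU (Fplus (frameAC A C))"
  shows "czero (Fplus (frameAC A C)) \<subseteq> X"
proof
  let ?F = "frameAC A C"
  fix g assume "g \<in> czero (Fplus ?F)"
  then have g: "g \<in> fG ?F" "rle A g (rzero A)" by (auto simp: Fplus_def lhd_def frameAC_def)
  have "fN ?F g p" if "p \<in> fT ?F" for p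
  proof -
    obtain u c where p: "p = (u, c)" "u \<in> ulin A (gen_subgroupoid A C)" using \<open>p \<in> fT ?F\<close>
      by (auto simp: frameAC_def)
    have "rle A (u g) (u (rzero A))" using ulin_mono[OF assms(1) p(2) g(2)] .
    moreover have "rle A (u (rzero A)) (rzero A)" using ulin_zero_le[OF assms(1,2) p(2)] .
    moreover have "rle A (rzero A) c" using assms(2) by (simp add: zero_bounded_def)
    ultimately have "rle A (u g) c" using rle_trans[OF assms(1)] by blast
    then show ?thesis by (simp add: p(1) frameAC_def)
  qed
  then have "g \<in> gammaN ?F X" using g(1) by (auto simp: gammaN_def lhd_def rhd_def)
  then show "g \<in> X" using assms(3) by (simp add: Fplus_def)
qed

theorem mainTheorem7:
  fixes A :: "'a rluz" and B :: "'a set"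
  assumes "interior_rluz A" and "integral A" and "finite B"
  shows "finite (cU (Fplus (frameAB0 A B))) \<and>
         (zero_bounded A \<longrightarrow>
            (\<forall>X \<in> cU (Fplus (frameAB0 A B)).
               cmeet (Fplus (frameAB0 A B)) (czero (Fplus (frameAB0 A B))) X
                 = czero (Fplus (frameAB0 A B))))"
proof -
  have A: "rluz_groupoid A" using assms(1) by (simp add: interior_rluz_def)
  have "finite (B \<union> {rzero A})" using assms(3) by simp
  then have "finite (cU (Fplus (frameAB0 A B)))"
    unfolding frameAB0_def by (intro finite_cU_Fplus finite_types_frameAC A assms(2))
  moreover have "czero (Fplus (frameAB0 A B)) \<subseteq> X"
    if "zero_bounded A" "X \<in> cU (Fplus (frameAB0 A B))" for X
    using czero_Fplus_frameAC_le[OF A that(1)] that(2) unfolding frameAB0_def by blast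
  ultimately show ?thesis by (auto simp: Fplus_def)
qed

end
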